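(* The homogeneous $(-1)$-configurations are exactly: $\mathcal{L}(1,0,2,1)$ and $\mathcal{L}(2,0,5,1)$ (non-compound), and the compound ones $\mathcal{L}(3,0,3,2)$ (with $\delta=1,n=3,\mu_1=0,\mu_2=1$), $\mathcal{L}(12,0,6,5)$ (with $\delta=2,n=6,\mu_1=0,\mu_2=1$), $\mathcal{L}(21,0,7,8)$ (with $\delta=3,n=7,\mu_1=2,\mu_2=1$), and $\mathcal{L}(48,0,8,17)$ (with $\delta=6,n=8,\mu_1=3,\mu_2=2$).
   Context: Let $p_1,\dots,p_n$ be general points of $\mathbb{P}^2$, $\mathbb{P}'$ the blow-up with pulled-back line class $H$, exceptional curves $E_i$, canonical class $K=-3H+\sum E_i$. $\mathcal{L}(d,0,n,m)$ denotes the class $dH-m\sum_{i=1}^nE_i$ (plane curves of degree $d$ with multiplicity $m$ at $p_1,\dots,p_n$). A numerical $(-1)$-class is a class $A$ with $A^2=-1$ and $A\cdot K=-1$. A homogeneous $(-1)$-configuration is either (non-compound) a class $\mathcal{L}(d,0,n,m)$ which is itself a numerical $(-1)$-class, or (compound) a class of the form $\sum_{\sigma}A_\sigma$ where $n\ge2$, $A=\delta H-\mu_1E_1-\mu_2\sum_{i=2}^nE_i$ is a numerical $(-1)$-class with $\delta\ge1$, $\mu_1,\mu_2\ge0$, $\mu_1\ne\mu_2$, the $A_\sigma$ are the $n$ distinct classes obtained from $A$ by permuting $E_1,\dots,E_n$, and $A_\sigma\cdot A_\tau=0$ for $A_\sigma\neq A_\tau$; this sum is $\mathcal{L}(n\delta,0,n,\mu_1+(n-1)\mu_2)$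 (and necessarily $\mu_1=\mu_2\pm1$). *)

theory Defs
  imports "HOL-Combinatorics.Permutations"
begin

text \<open>Divisor classes on the blow-up of the plane at n general points p_0,...,p_{n-1}.
  A class d H - sum_i m_i E_i is represented by the pair (d, m) with m :: nat => int;
  only the values m i for i < n are meaningful (by convention they are 0 for i >= n).\<close>

type_synonym cls = "int \<times> (nat \<Rightarrow> int)"

text \<open>Intersection form: H.H = 1, E_i.E_i = -1, all other products 0.\<close>
definition dotp :: "nat \<Rightarrow> cls \<Rightarrow> cls \<Rightarrow> int" where
  "dotp n A B = fst A * fst B - (\<Sum>i<n. snd A i * snd B i)"

text \<open>Canonical class K = -3H + sum E_i, i.e. d = -3 and all multiplicities -1.\<close>
definition canon :: "nat \<Rightarrow> cls" where
  "canon n = (-3, \<lambda>i. if i < n then -1 else 0)"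

definition minus_one_class :: "nat \<Rightarrow> cls \<Rightarrow> bool" where
  "minus_one_class n A \<longleftrightarrow> dotp n A A = -1 \<and> dotp n A (canon n) = -1"

text \<open>The homogeneous class L(d,0,n,m) = dH - m sum_{i<n} E_i.\<close>
definition Lcls :: "nat \<Rightarrow> int \<Rightarrow> int \<Rightarrow> cls" where
  "Lcls n d m = (d, \<lambda>i. if i < n then m else 0)"

definition perm_cls :: "(nat \<Rightarrow> nat) \<Rightarrow> cls \<Rightarrow> cls" where
  "perm_cls \<sigma> A = (fst A, snd A \<circ> \<sigma>)"

definition cls_sum :: "cls set \<Rightarrow> cls" where
  "cls_sum S = ((\<Sum>c\<in>S. fst c), (\<lambda>i. \<Sum>c\<in>S. snd c i))"

definition Acls :: "nat \<Rightarrow> int \<Rightarrow> int \<Rightarrow> int \<Rightarrow> cls" where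
  "Acls n \<delta> \<mu>1 \<mu>2 = (\<delta>, \<lambda>i. if i = 0 then \<mu>1 else if i < n then \<mu>2 else 0)"

definition perm_orbit :: "nat \<Rightarrow> cls \<Rightarrow> cls set" where
  "perm_orbit n A = (\<lambda>\<sigma>. perm_cls \<sigma> A) ` {\<sigma>. \<sigma> permutes {..<n}}"

definition noncompound_config :: "nat \<Rightarrow> cls \<Rightarrow> bool" where
  "noncompound_config n C \<longleftrightarrow>
     (\<exists>d m. d \<ge> 0 \<and> m \<ge> 0 \<and> C = Lcls n d m \<and> minus_one_class n C)"

definition compound_config :: "nat \<Rightarrow> cls \<Rightarrow> bool" where
  "compound_config n C \<longleftrightarrow> n \<ge> 2 \<and>
     (\<exists>\<delta> \<mu>1 \<mu>2. \<delta> \<ge> 1 \<and> \<mu>1 \<ge> 0 \<and> \<mu>2 \<ge> 0 \<and> \<mu>1 \<noteq> \<mu>2 \<and>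
        minus_one_class n (Acls n \<delta> \<mu>1 \<mu>2) \<and>
        (\<forall>X\<in>perm_orbit n (Acls n \<delta> \<mu>1 \<mu>2). \<forall>Y\<in>perm_orbit n (Acls n \<delta> \<mu>1 \<mu>2).
            X \<noteq> Y \<longrightarrow> dotp n X Y = 0) \<and>
        C = cls_sum (perm_orbit n (Acls n \<delta> \<mu>1 \<mu>2)))"

definition homog_config :: "nat \<Rightarrow> cls \<Rightarrow> bool" where
  "homog_config n C \<longleftrightarrow> noncompound_config n C \<or> compound_config n C"

end

theory Submission
  imports Defs
begin

(* Both kinds of configuration come down to small Diophantine systems.  For L(d,0,n,m)
   itself, d^2 - n m^2 = -1 and n m = 3d - 1; eliminating n gives m (3d - 1) = d^2 + 1, i.e.
   (3d - 1)(9m - 3d - 1) = 10, so d <= 3.  In the compound case the orbit of A consists of the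
   n classes carrying mu1 at one E_j and mu2 at the others; subtracting the orthogonality of two
   of them from A^2 = -1 gives (mu1 - mu2)^2 = 1, and then the linear and quadratic equations
   collapse to mu2 (9 - n) = 2 (if mu1 = mu2 + 1) or delta (9 - n) = 6 (if mu1 = mu2 - 1). *)

definition Acls_at :: "nat \<Rightarrow> int \<Rightarrow> int \<Rightarrow> int \<Rightarrow> nat \<Rightarrow> cls" where
  "Acls_at n \<delta> \<mu>1 \<mu>2 j = (\<delta>, \<lambda>i. if i = j then \<mu>1 else if i < n then \<mu>2 else 0)"

lemma Acls_eq_Acls_at_0: "Acls n \<delta> a b = Acls_at n \<delta> a b 0"
  by (simp add: Acls_def Acls_at_def)

lemma sum_if_eq_else:
  fixes a b :: "'a::comm_ring_1"
  assumes "j < n"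
  shows "(\<Sum>i<n. if i = j then a else b) = a + (of_nat n - 1) * b"
proof -
  have "(\<Sum>i<n. if i = j then a else b) = (\<Sum>i<n. b + (if i = j then a - b else 0))"
    by (rule sum.cong) auto
  also have "\<dots> = of_nat n * b + (a - b)"
    using assms by (simp add: sum.distrib)
  finally show ?thesis
    by (simp add: algebra_simps)
qed

lemma sum_if_eq_else_mult:
  fixes a b :: "'a::comm_ring_1"
  assumes "j < n" "k < n" "j \<noteq> k"
  shows "(\<Sum>i<n. (if i = j then a else b) * (if i = k then a else b)) = 2 * a * b + (of_nat n - 2) * b\<^sup>2"
proof -
  have "(\<Sum>i<n. (if i = j then a else b) * (if i = k then a else b)) =
      (\<Sum>i<n. b * b + ((if i = j then (a - b) * b else 0) + (if i = k then (a - b) * b else 0)))"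
    by (rule sum.cong) (use assms in \<open>auto simp: algebra_simps\<close>)
  also have "\<dots> = of_nat n * (b * b) + 2 * ((a - b) * b)"
    using assms by (simp add: sum.distrib)
  finally show ?thesis
    by (simp add: algebra_simps power2_eq_square)
qed

lemma dotp_Acls_at_self:
  assumes "j < n"
  shows "dotp n (Acls_at n \<delta> a b j) (Acls_at n \<delta> a b j) = \<delta>\<^sup>2 - (a\<^sup>2 + (int n - 1) * b\<^sup>2)"
proof -
  have "(\<Sum>i<n. snd (Acls_at n \<delta> a b j) i * snd (Acls_at n \<delta> a b j) i) =
      (\<Sum>i<n. if i = j then a\<^sup>2 else b\<^sup>2)"
    by (rule sum.cong) (auto simp: Acls_at_def power2_eq_square)
  then show ?thesis
    using sum_if_eq_else[OF assms, of "a\<^sup>2" "b\<^sup>2"] by (simp add: dotp_def Acls_at_def power2_eq_square)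
qed

lemma dotp_Acls_at_canon:
  assumes "j < n"
  shows "dotp n (Acls_at n \<delta> a b j) (canon n) = a + (int n - 1) * b - 3 * \<delta>"
proof -
  have "(\<Sum>i<n. snd (Acls_at n \<delta> a b j) i * snd (canon n) i) = - (\<Sum>i<n. if i = j then a else b)"
    by (subst sum_negf[symmetric], rule sum.cong) (auto simp: Acls_at_def canon_def)
  then show ?thesis
    using sum_if_eq_else[OF assms, of a b] by (simp add: dotp_def Acls_at_def canon_def)
qed

lemma dotp_Acls_at_distinct:
  assumes "j < n" "k < n" "j \<noteq> k"
  shows "dotp n (Acls_at n \<delta> a b j) (Acls_at n \<delta> a b k) = \<delta>\<^sup>2 - (2 * a * b + (int n - 2) * b\<^sup>2)"
proof -
  have "(\<Sum>i<n. snd (Acls_at n \<delta> a b j) i * snd (Acls_at n \<delta> a b k) i) =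
      (\<Sum>i<n. (if i = j then a else b) * (if i = k then a else b))"
    by (rule sum.cong) (auto simp: Acls_at_def)
  then show ?thesis
    using sum_if_eq_else_mult[OF assms, of a b] by (simp add: dotp_def Acls_at_def power2_eq_square)
qed

lemma minus_one_class_Acls_iff:
  assumes "0 < n"
  shows "minus_one_class n (Acls n \<delta> a b) \<longleftrightarrow>
    \<delta>\<^sup>2 - (a\<^sup>2 + (int n - 1) * b\<^sup>2) = -1 \<and> a + (int n - 1) * b = 3 * \<delta> - 1"
  using dotp_Acls_at_self[OF assms] dotp_Acls_at_canon[OF assms]
  by (auto simp: minus_one_class_def Acls_eq_Acls_at_0)

lemma perm_cls_Acls:
  assumes "\<sigma> permutes {..<n}" "0 < n"
  shows "perm_cls \<sigma> (Acls n \<delta> a b) = Acls_at n \<delta> a b (inv \<sigma> 0)"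
proof -
  have "(if \<sigma> i = 0 then a else if \<sigma> i < n then b else 0) =
        (if i = inv \<sigma> 0 then a else if i < n then b else 0)" for i
  proof (cases "i < n")
    case True
    then have "\<sigma> i < n"
      using permutes_in_image[OF assms(1)] by simp
    moreover have "\<sigma> i = 0 \<longleftrightarrow> i = inv \<sigma> 0"
      using permutes_inv_eq[OF assms(1), of 0 i] by auto
    ultimately show ?thesis
      using True by simp
  next
    case False
    moreover have "inv \<sigma> 0 < n"
      using permutes_in_image[OF permutes_inv[OF assms(1)], of 0] assms(2) by simp
    ultimately show ?thesis
      using permutes_not_in[OF assms(1)] assms(2) by auto
  qed
  then show ?thesis
    by (simp add: perm_cls_def Acls_def Acls_at_def o_def)
qed

lemma perm_cls_transpose_Acls:
  assumes "j < n"
  shows "perm_cls (transpose 0 j) (Acls n \<delta> a b) = Acls_at n \<delta> a b j"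
  using assms by (auto simp: perm_cls_def Acls_def Acls_at_def o_def transpose_def)

lemma perm_orbit_Acls:
  assumes "0 < n"
  shows "perm_orbit n (Acls n \<delta> a b) = Acls_at n \<delta> a b ` {..<n}"
proof
  show "perm_orbit n (Acls n \<delta> a b) \<subseteq> Acls_at n \<delta> a b ` {..<n}"
  proof
    fix X assume "X \<in> perm_orbit n (Acls n \<delta> a b)"
    then obtain \<sigma> where \<sigma>: "\<sigma> permutes {..<n}" and X: "X = perm_cls \<sigma> (Acls n \<delta> a b)"
      unfolding perm_orbit_def by auto
    have "inv \<sigma> 0 < n"
      using permutes_in_image[OF permutes_inv[OF \<sigma>], of 0] assms by simp
    then show "X \<in> Acls_at n \<delta> a b ` {..<n}"
      unfolding X perm_cls_Acls[OF \<sigma> assms] by simp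
  qed
next
  show "Acls_at n \<delta> a b ` {..<n} \<subseteq> perm_orbit n (Acls n \<delta> a b)"
  proof
    fix X assume "X \<in> Acls_at n \<delta> a b ` {..<n}"
    then obtain j where j: "j < n" and X: "X = Acls_at n \<delta> a b j"
      by auto
    have "transpose 0 j permutes {..<n}"
      using permutes_swap_id[of 0 "{..<n}" j] j assms by simp
    then show "X \<in> perm_orbit n (Acls n \<delta> a b)"
      unfolding perm_orbit_def X perm_cls_transpose_Acls[OF j, symmetric] by blast
  qed
qed

lemma Acls_at_eq_iff:
  assumes "a \<noteq> b" "j < n" "k < n"
  shows "Acls_at n \<delta> a b j = Acls_at n \<delta> a b k \<longleftrightarrow> j = k"
proof
  assume "Acls_at n \<delta> a b j = Acls_at n \<delta> a b k"
  then have "snd (Acls_at n \<delta> a b j) j = snd (Acls_at n \<delta> a b k) j"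
    by simp
  then show "j = k"
    using assms by (auto simp: Acls_at_def split: if_splits)
qed simp

lemma cls_sum_perm_orbit_Acls:
  assumes "0 < n" "a \<noteq> b"
  shows "cls_sum (perm_orbit n (Acls n \<delta> a b)) = Lcls n (int n * \<delta>) (a + (int n - 1) * b)"
proof -
  have inj: "inj_on (Acls_at n \<delta> a b) {..<n}"
    using Acls_at_eq_iff[OF assms(2)] by (auto intro: inj_onI)
  have "(\<Sum>j<n. snd (Acls_at n \<delta> a b j) i) = (if i < n then a + (int n - 1) * b else 0)" for i
  proof (cases "i < n")
    case True
    have "(\<Sum>j<n. snd (Acls_at n \<delta> a b j) i) = (\<Sum>j<n. if j = i then a else b)"
      by (rule sum.cong) (use True in \<open>auto simp: Acls_at_def\<close>)
    then show ?thesis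
      using sum_if_eq_else[OF True, of a b] True by simp
  qed (simp add: Acls_at_def)
  then show ?thesis
    unfolding perm_orbit_Acls[OF assms(1)] cls_sum_def sum.reindex[OF inj]
    by (simp add: Acls_at_def Lcls_def)
qed

lemma pairwise_orthogonal_perm_orbit_Acls_iff:
  assumes "2 \<le> n" "a \<noteq> b"
  shows "(\<forall>X\<in>perm_orbit n (Acls n \<delta> a b). \<forall>Y\<in>perm_orbit n (Acls n \<delta> a b). X \<noteq> Y \<longrightarrow> dotp n X Y = 0)
    \<longleftrightarrow> \<delta>\<^sup>2 = 2 * a * b + (int n - 2) * b\<^sup>2"
    (is "?orth \<longleftrightarrow> ?eq")
proof -
  have "?orth \<longleftrightarrow> (\<forall>j<n. \<forall>k<n. j \<noteq> k \<longrightarrow> dotp n (Acls_at n \<delta> a b j) (Acls_at n \<delta> a b k) = 0)"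
    using assms by (auto simp: perm_orbit_Acls Acls_at_eq_iff)
  also have "\<dots> \<longleftrightarrow> ?eq"
  proof
    assume "\<forall>j<n. \<forall>k<n. j \<noteq> k \<longrightarrow> dotp n (Acls_at n \<delta> a b j) (Acls_at n \<delta> a b k) = 0"
    then show ?eq
      using assms dotp_Acls_at_distinct[of 0 n 1 \<delta> a b] by force
  qed (simp add: dotp_Acls_at_distinct)
  finally show ?thesis .
qed

lemma compound_config_iff:
  "compound_config n C \<longleftrightarrow> 2 \<le> n \<and>
    (\<exists>\<delta> a b. 1 \<le> \<delta> \<and> 0 \<le> a \<and> 0 \<le> b \<and> a \<noteq> b \<and>
       \<delta>\<^sup>2 - (a\<^sup>2 + (int n - 1) * b\<^sup>2) = -1 \<and> a + (int n - 1) * b = 3 * \<delta> - 1 \<and>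
       \<delta>\<^sup>2 = 2 * a * b + (int n - 2) * b\<^sup>2 \<and>
       C = Lcls n (int n * \<delta>) (a + (int n - 1) * b))"
proof (cases "2 \<le> n")
  case True
  then have "0 < n" by simp
  with True show ?thesis
    unfolding compound_config_def
    \<comment> \<open>\<open>conj_cong\<close> makes \<open>a \<noteq> b\<close> available to the conditional rewrites\<close>
    by (simp add: minus_one_class_Acls_iff pairwise_orthogonal_perm_orbit_Acls_iff
        cls_sum_perm_orbit_Acls cong: conj_cong)
qed (simp add: compound_config_def)

lemma Lcls_eq_iff: "Lcls n d m = Lcls n d' m' \<longleftrightarrow> d = d' \<and> (0 < n \<longrightarrow> m = m')"
  by (auto simp: Lcls_def fun_eq_iff)

lemma minus_one_class_Lcls_iff:
  "minus_one_class n (Lcls n d m) \<longleftrightarrow> d\<^sup>2 - int n * m\<^sup>2 = -1 \<and> int n * m = 3 * d - 1"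
  by (auto simp: minus_one_class_def dotp_def Lcls_def canon_def power2_eq_square)

lemma noncompound_minus_one_solutions:
  fixes N d m :: int
  assumes "0 \<le> N" "0 \<le> m" "d\<^sup>2 - N * m\<^sup>2 = -1" "N * m = 3 * d - 1"
  shows "(N, d, m) \<in> {(2, 1, 1), (5, 2, 1)}"
proof -
  have "m * (3 * d - 1) = m * (N * m)"
    using assms(4) by simp
  also have "\<dots> = d\<^sup>2 + 1"
    using assms(3) by (simp add: power2_eq_square algebra_simps)
  finally have factor: "(3 * d - 1) * (9 * m - 3 * d - 1) = 10"
    by (simp add: power2_eq_square algebra_simps)
  have "0 \<le> N * m"
    using assms(1,2) by simp
  with assms(4) have "1 \<le> d"
    by linarith
  moreover have "3 * d - 1 \<le> 10"
    using factor by (intro zdvd_imp_le) (auto intro: dvdI)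
  ultimately have "d \<in> {1, 2, 3}"
    by auto
  then show ?thesis
    using factor assms(4) by (auto; presburger)
qed

lemma compound_solutions_mu1_gt:
  fixes N \<delta> b :: int
  assumes "1 \<le> \<delta>" "N * b = 3 * \<delta> - 2" "\<delta>\<^sup>2 = N * b\<^sup>2 + 2 * b"
  shows "(N, \<delta>, b) \<in> {(7, 3, 1), (8, 6, 2)}"
proof -
  have "\<delta> * \<delta> = b * (N * b) + 2 * b"
    using assms(3) by (simp add: power2_eq_square algebra_simps)
  also have "\<dots> = b * (N * b + 2)"
    by (simp add: algebra_simps)
  also have "\<dots> = \<delta> * (3 * b)"
    unfolding assms(2) by (simp add: algebra_simps)
  finally have "\<delta> * \<delta> = \<delta> * (3 * b)" .
  then have \<delta>: "\<delta> = 3 * b"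
    using assms(1) by simp
  with assms(2) have factor: "b * (9 - N) = 2"
    by (simp add: algebra_simps)
  have "1 \<le> b"
    using assms(1) \<delta> by simp
  moreover have "b \<le> 2"
    using factor by (intro zdvd_imp_le) (auto intro: dvdI)
  ultimately have "b \<in> {1, 2}"
    by auto
  then show ?thesis
    using factor \<delta> by auto
qed

lemma compound_solutions_mu1_lt:
  fixes N \<delta> b :: int
  assumes "1 \<le> \<delta>" "N * b = 3 * \<delta>" "\<delta>\<^sup>2 = N * b\<^sup>2 - 2 * b"
  shows "(N, \<delta>, b) \<in> {(3, 1, 1), (6, 2, 1)}"
proof -
  have "\<delta> * (N * \<delta>) = N * \<delta>\<^sup>2"
    by (simp add: power2_eq_square)
  also have "\<dots> = N * (N * b\<^sup>2 - 2 * b)"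
    using assms(3) by simp
  also have "\<dots> = (N * b)\<^sup>2 - 2 * (N * b)"
    by (simp add: power2_eq_square algebra_simps)
  also have "\<dots> = \<delta> * (9 * \<delta> - 6)"
    using assms(2) by (simp add: power2_eq_square algebra_simps)
  finally have "N * \<delta> = 9 * \<delta> - 6"
    using assms(1) by simp
  then have factor: "\<delta> * (9 - N) = 6"
    by (simp add: algebra_simps)
  then have "\<delta> \<le> 6"
    by (intro zdvd_imp_le) (auto intro: dvdI)
  with assms(1) have "\<delta> \<in> {1, 2, 3, 4, 5, 6}"
    by auto
  then show ?thesis
    using factor assms(2) by (auto; presburger)
qed

lemma compound_minus_one_solutions:
  fixes N \<delta> a b :: int
  assumes "1 \<le> \<delta>" "\<delta>\<^sup>2 - (a\<^sup>2 + (N - 1) * b\<^sup>2) = -1" "a + (N - 1) * b = 3 * \<delta> - 1"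
    "\<delta>\<^sup>2 = 2 * a * b + (N - 2) * b\<^sup>2"
  shows "(N, \<delta>, a, b) \<in> {(3, 1, 0, 1), (6, 2, 0, 1), (7, 3, 2, 1), (8, 6, 3, 2)}"
proof -
  have "(a - b)\<^sup>2 = 1"
    using assms(2,4) by (simp add: power2_eq_square algebra_simps)
  then have "a - b = 1 \<or> a - b = -1"
    by (simp add: power2_eq_1_iff)
  then consider "a = b + 1" | "a = b - 1"
    by linarith
  then show ?thesis
  proof cases
    case 1
    have "N * b = 3 * \<delta> - 2"
      using assms(3) unfolding 1 by (simp add: algebra_simps)
    moreover have "\<delta>\<^sup>2 = N * b\<^sup>2 + 2 * b"
      using assms(4) unfolding 1 by (simp add: power2_eq_square algebra_simps)
    ultimately have "(N, \<delta>, b) \<in> {(7, 3, 1), (8, 6, 2)}"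
      by (rule compound_solutions_mu1_gt[OF assms(1)])
    with 1 show ?thesis
      by auto
  next
    case 2
    have "N * b = 3 * \<delta>"
      using assms(3) unfolding 2 by (simp add: algebra_simps)
    moreover have "\<delta>\<^sup>2 = N * b\<^sup>2 - 2 * b"
      using assms(4) unfolding 2 by (simp add: power2_eq_square algebra_simps)
    ultimately have "(N, \<delta>, b) \<in> {(3, 1, 1), (6, 2, 1)}"
      by (rule compound_solutions_mu1_lt[OF assms(1)])
    with 2 show ?thesis
      by auto
  qed
qed

lemma noncompound_config_Lcls_iff:
  fixes n d m :: nat
  shows "noncompound_config n (Lcls n (int d) (int m)) \<longleftrightarrow> (n, d, m) \<in> {(2, 1, 1), (5, 2, 1)}"
proof -
  have "noncompound_config n (Lcls n (int d) (int m)) \<longleftrightarrow> minus_one_class n (Lcls n (int d) (int m))"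
    unfolding noncompound_config_def using of_nat_0_le_iff by blast
  also have "\<dots> \<longleftrightarrow> (n, d, m) \<in> {(2, 1, 1), (5, 2, 1)}"
  proof
    assume "minus_one_class n (Lcls n (int d) (int m))"
    then have "(int n, int d, int m) \<in> {(2, 1, 1), (5, 2, 1)}"
      by (intro noncompound_minus_one_solutions) (simp_all add: minus_one_class_Lcls_iff)
    then show "(n, d, m) \<in> {(2, 1, 1), (5, 2, 1)}"
      by auto
  qed (auto simp: minus_one_class_Lcls_iff)
  finally show ?thesis .
qed

lemma compound_config_Lcls_iff:
  fixes n d m :: nat
  shows "compound_config n (Lcls n (int d) (int m)) \<longleftrightarrow>
    (n, d, m) \<in> {(3, 3, 2), (6, 12, 5), (7, 21, 8), (8, 48, 17)}"
proof
  assume "compound_config n (Lcls n (int d) (int m))"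
  then obtain \<delta> a b where "2 \<le> n" "1 \<le> \<delta>"
    and eqs: "\<delta>\<^sup>2 - (a\<^sup>2 + (int n - 1) * b\<^sup>2) = -1" "a + (int n - 1) * b = 3 * \<delta> - 1"
      "\<delta>\<^sup>2 = 2 * a * b + (int n - 2) * b\<^sup>2"
    and "Lcls n (int d) (int m) = Lcls n (int n * \<delta>) (a + (int n - 1) * b)"
    unfolding compound_config_iff by blast
  then have "int d = int n * \<delta>" "int m = a + (int n - 1) * b"
    by (simp_all add: Lcls_eq_iff)
  moreover have "(int n, \<delta>, a, b) \<in> {(3, 1, 0, 1), (6, 2, 0, 1), (7, 3, 2, 1), (8, 6, 3, 2)}"
    using \<open>1 \<le> \<delta>\<close> eqs by (rule compound_minus_one_solutions)
  ultimately show "(n, d, m) \<in> {(3, 3, 2), (6, 12, 5), (7, 21, 8), (8, 48, 17)}"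
    by auto
next
  have compound_of_solution: "compound_config n (Lcls n (int n * \<delta>) (a + (int n - 1) * b))"
    if "2 \<le> n" "1 \<le> \<delta>" "0 \<le> a" "0 \<le> b" "a \<noteq> b"
      "\<delta>\<^sup>2 - (a\<^sup>2 + (int n - 1) * b\<^sup>2) = -1" "a + (int n - 1) * b = 3 * \<delta> - 1"
      "\<delta>\<^sup>2 = 2 * a * b + (int n - 2) * b\<^sup>2"
    for n \<delta> a b
    unfolding compound_config_iff using that by blast
  assume "(n, d, m) \<in> {(3, 3, 2), (6, 12, 5), (7, 21, 8), (8, 48, 17)}"
  then consider "(n, d, m) = (3, 3, 2)" | "(n, d, m) = (6, 12, 5)" | "(n, d, m) = (7, 21, 8)"
    | "(n, d, m) = (8, 48, 17)"
    by blast
  then show "compound_config n (Lcls n (int d) (int m))"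
  proof cases
    case 1
    then show ?thesis using compound_of_solution[of 3 1 0 1] by simp
  next
    case 2
    then show ?thesis using compound_of_solution[of 6 2 0 1] by simp
  next
    case 3
    then show ?thesis using compound_of_solution[of 7 3 2 1] by simp
  next
    case 4
    then show ?thesis using compound_of_solution[of 8 6 3 2] by simp
  qed
qed

theorem proposition5p4:
  fixes n d m :: nat
  shows "homog_config n (Lcls n (int d) (int m)) \<longleftrightarrow>
    (n, d, m) \<in> {(2, 1, 1), (5, 2, 1), (3, 3, 2), (6, 12, 5), (7, 21, 8), (8, 48, 17)}"
  unfolding homog_config_def noncompound_config_Lcls_iff compound_config_Lcls_iff by auto

end
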